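(* Let $\mathcal{W}$ be a finite vocabulary and suppose text $w_{1:n}$ is fully generated by the Gumbel-max watermarked model, so that for each $t$, conditionally on $\mathbf{P}_t$, the pivotal statistic $Y_t$ has distribution $\mu_{1,\mathbf{P}_t}$. Let $T_n^{\mathrm{ars}}=\sum_{t=1}^n h_{\mathrm{ars}}(Y_t)$ with $h_{\mathrm{ars}}(y)=-\log(1-y)$. Then $$n+\sum_{t=1}^n\mathbb{E}_1\mathrm{Ent}(\mathbf{P}_t)\ \ge\ \mathbb{E}_1T_n^{\mathrm{ars}}\ \ge\ n+\Big(\frac{\pi^2}{6}-1\Big)\sum_{t=1}^n\mathbb{E}_1\mathrm{Ent}(\mathbf{P}_t),$$ where $\mathbb{E}_1$ is the expectation under this watermarked generation (including over the random $\mathbf{P}_1,\dots,\mathbf{P}_n$).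
   Context: For a probability vector $\mathbf{P}=(P_w)_{w\in\mathcal{W}}$, $\mu_{1,\mathbf{P}}$ is the distribution on $[0,1]$ with CDF $F_{1,\mathbf{P}}(r)=\sum_w P_w r^{1/P_w}$ (terms with $P_w=0$ are $0$), and $\mathrm{Ent}(\mathbf{P})=-\sum_w P_w\log P_w$ is the Shannon entropy (natural logarithm). In the Gumbel-max scheme, at step $t$ the next-token distribution is $\mathbf{P}_t$, $\xi_t=(U_{t,w})_w$ has i.i.d. $U(0,1)$ entries independent of the past, the token is $w_t=\arg\max_w \frac{\log U_{t,w}}{P_{t,w}}$, and $Y_t=U_{t,w_t}$. *)

theory Defs
  imports "HOL-Probability.Probability"
begin

text \<open>CDF of mu_{1,P}: F(r) = sum_w P_w r^(1/P_w) on [0,1], extended by 0 below 0 and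
  1 above 1 (terms with P_w = 0 are 0).\<close>
definition F1 :: "('w::finite \<Rightarrow> real) \<Rightarrow> real \<Rightarrow> real" where
  "F1 P r = (if r < 0 then 0 else if 1 \<le> r then 1
             else (\<Sum>w\<in>UNIV. if P w = 0 then 0 else P w * r powr (1 / P w)))"

definition mu1 :: "('w::finite \<Rightarrow> real) \<Rightarrow> real measure" where
  "mu1 P = interval_measure (F1 P)"

definition Ent :: "('w::finite \<Rightarrow> real) \<Rightarrow> real" where
  "Ent P = - (\<Sum>w\<in>UNIV. if P w = 0 then 0 else P w * ln (P w))"

definition prob_vector :: "('w::finite \<Rightarrow> real) \<Rightarrow> bool" where
  "prob_vector P \<longleftrightarrow> (\<forall>w. 0 \<le> P w) \<and> (\<Sum>w\<in>UNIV. P w) = 1"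

definition h_ars :: "real \<Rightarrow> real" where
  "h_ars y = - ln (1 - y)"

end

theory Submission
  imports Defs
begin

text \<open>
  For Y with law mu1 P one has P(Y^m > s) = 1 - F1 P (s^(1/m)) for s > 0, hence
  E Y^m = sum_w P_w / (m P_w + 1). Expanding h_ars y = sum_m y^m / m gives
  E h_ars(Y) = sum_w P_w (psi (1 + 1/P_w) + gamma) with the digamma function psi, and by
  Fubini the same holds after averaging over a random P. Both bounds then follow termwise from
  1 + c ln a <= psi (1 + a) + gamma <= 1 + ln a for a >= 1, c = pi^2/6 - 1, where equality
  holds at a = 1; after differentiating this amounts to c / a <= psi' (1 + a) <= 1 / a.
  The upper bound comes from telescoping the series of psi'. For the lower one,
  a psi' (1 + a) = int_0^oo e^(-u) B (u / a) du with B x = x / (e^x - 1) decreasing, so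
  a psi' (1 + a) increases from its value pi^2/6 - 1 at a = 1.
\<close>

section \<open>Bounds on the trigamma function\<close>

definition x_div_expm1 :: "real \<Rightarrow> real" where
  "x_div_expm1 x = x / (exp x - 1)"

lemma x_div_expm1_sums:
  assumes "0 < x"
  shows "(\<lambda>k. x * exp (- ((real k + 1) * x))) sums x_div_expm1 x"
proof -
  have "(\<lambda>k. x * exp (- x) * exp (- x) ^ k) sums (x * exp (- x) * (1 / (1 - exp (- x))))"
    using assms by (intro sums_mult geometric_sums) simp
  moreover have "x * exp (- x) * exp (- x) ^ k = x * exp (- ((real k + 1) * x))" for k
    by (simp add: exp_of_nat_mult[symmetric] exp_add[symmetric] algebra_simps)
  moreover have "x * exp (- x) * (1 / (1 - exp (- x))) = x_div_expm1 x"
    using assms by (simp add: x_div_expm1_def exp_minus field_simps)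
  ultimately show ?thesis by simp
qed

lemma x_div_expm1_antimono:
  assumes "0 < x" "x \<le> y"
  shows "x_div_expm1 y \<le> x_div_expm1 x"
proof (rule deriv_nonpos_imp_antimono[OF _ _ \<open>x \<le> y\<close>])
  fix t assume "t \<in> {x..y}"
  then have t: "0 < t" using assms by auto
  then have "exp t \<noteq> 1" by simp
  then show "(x_div_expm1 has_real_derivative (exp t - 1 - t * exp t) / (exp t - 1)\<^sup>2) (at t)"
    unfolding x_div_expm1_def[abs_def]
    by (auto intro!: derivative_eq_intros simp: power2_eq_square field_simps)
  have "1 - t \<le> exp (- t)" using exp_ge_add_one_self[of "- t"] by simp
  then have "exp t * (1 - t) \<le> 1" by (simp add: exp_minus field_simps)
  then show "(exp t - 1 - t * exp t) / (exp t - 1)\<^sup>2 \<le> 0"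
    by (intro divide_nonpos_nonneg) (simp_all add: algebra_simps)
qed

lemma Polygamma_1_sums:
  assumes "0 < (s::real)"
  shows "(\<lambda>k. 1 / (s + real k)\<^sup>2) sums Polygamma 1 s"
proof -
  have "summable (\<lambda>k. inverse ((s + real k) ^ 2))"
    using assms by (intro Polygamma_converges') auto
  then show ?thesis
    by (simp add: Polygamma_def summable_sums inverse_eq_divide eval_nat_numeral)
qed

lemma Polygamma_1_2: "Polygamma 1 (2::real) = pi\<^sup>2 / 6 - 1"
proof -
  have "(\<lambda>k. 1 / (1 + real k)\<^sup>2) sums (pi\<^sup>2 / 6)"
    using inverse_squares_sums by (simp add: add.commute)
  then have "Polygamma 1 (1::real) = pi\<^sup>2 / 6"
    using sums_unique2[OF Polygamma_1_sums] by simp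
  then show ?thesis
    using Polygamma_plus1[of "1::real" 1] by simp
qed

lemma Polygamma_1_succ_le:
  assumes "0 < (s::real)"
  shows "Polygamma 1 (s + 1) \<le> 1 / s"
proof -
  have telescope: "(\<lambda>k. 1 / (s + real k) - 1 / (s + real (Suc k))) sums (1 / (s + real 0) - 0)"
    by (intro telescope_sums' tendsto_divide_0[OF tendsto_const]
        filterlim_tendsto_add_at_top[OF tendsto_const filterlim_real_sequentially]
        filterlim_at_top_imp_at_infinity)
  have "1 / (s + 1 + real k)\<^sup>2 \<le> 1 / (s + real k) - 1 / (s + real (Suc k))" for k
  proof -
    have "1 / (s + real k) - 1 / (s + real (Suc k)) = 1 / ((s + real k) * (s + 1 + real k))"
      using assms by (simp add: field_simps)
    then show ?thesis
      using assms by (auto simp: power2_eq_square divide_simps intro!: mult_mono)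
  qed
  then show ?thesis
    using sums_le[OF _ Polygamma_1_sums telescope] assms by simp
qed

lemma nn_integral_Polygamma_1_term:
  assumes t: "0 < t"
  shows "(\<integral>\<^sup>+u\<in>{0<..}. ennreal (exp (- u) * (u / t * exp (- ((real k + 1) * (u / t))))) \<partial>lborel)
    = ennreal (t / (t + 1 + real k)\<^sup>2)"
proof -
  define l where "l = (t + 1 + real k) / t"
  have l: "0 < l" using t by (simp add: l_def)
  have "ennreal (exp (- u) * (u / t * exp (- ((real k + 1) * (u / t))))) * indicator {0<..} u
      = ennreal (1 / (t * l\<^sup>2)) * ennreal (erlang_density 1 l u)" for u
  proof -
    have "exp (- u) * exp (- ((real k + 1) * (u / t))) = exp (- l * u)"
      using t by (simp add: l_def exp_add[symmetric] field_simps)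
    then show ?thesis
      using t l by (auto simp: erlang_density_def indicator_def ennreal_mult[symmetric]
          power2_eq_square field_simps)
  qed
  then have "(\<integral>\<^sup>+u\<in>{0<..}. ennreal (exp (- u) * (u / t * exp (- ((real k + 1) * (u / t))))) \<partial>lborel)
      = ennreal (1 / (t * l\<^sup>2)) * (\<integral>\<^sup>+u. ennreal (erlang_density 1 l u) \<partial>lborel)"
    by (simp add: nn_integral_cmult)
  also have "(\<integral>\<^sup>+u. ennreal (erlang_density 1 l u) \<partial>lborel) = 1"
    using nn_integral_erlang_ith_moment[OF l, of 1 0] by simp
  also have "1 / (t * l\<^sup>2) = t / (t + 1 + real k)\<^sup>2"
    using t by (simp add: l_def power_divide power2_eq_square)
  finally show ?thesis by simp
qed

lemma Polygamma_1_succ_integral: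
  assumes t: "0 < t"
  shows "ennreal (t * Polygamma 1 (t + 1))
    = (\<integral>\<^sup>+u\<in>{0<..}. ennreal (exp (- u) * x_div_expm1 (u / t)) \<partial>lborel)"
proof -
  define f where "f k u = exp (- u) * (u / t * exp (- ((real k + 1) * (u / t))))" for k u
  have "(\<lambda>k. t * (1 / (t + 1 + real k)\<^sup>2)) sums (t * Polygamma 1 (t + 1))"
    using t by (intro sums_mult Polygamma_1_sums) simp
  then have "ennreal (t * Polygamma 1 (t + 1)) = (\<Sum>k. ennreal (t / (t + 1 + real k)\<^sup>2))"
    using t by (intro suminf_ennreal_eq[symmetric]) auto
  also have "\<dots> = (\<Sum>k. \<integral>\<^sup>+u\<in>{0<..}. ennreal (f k u) \<partial>lborel)"
    unfolding f_def nn_integral_Polygamma_1_term[OF t] ..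
  also have "\<dots> = (\<integral>\<^sup>+u\<in>{0<..}. (\<Sum>k. ennreal (f k u)) \<partial>lborel)"
    by (subst nn_integral_suminf[symmetric]) (simp_all add: f_def)
  also have "\<dots> = (\<integral>\<^sup>+u\<in>{0<..}. ennreal (exp (- u) * x_div_expm1 (u / t)) \<partial>lborel)"
  proof (rule set_nn_integral_cong[OF refl refl])
    fix u :: real assume u: "u \<in> space lborel \<inter> {0<..}"
    then have "(\<lambda>k. f k u) sums (exp (- u) * x_div_expm1 (u / t))"
      using t unfolding f_def by (intro sums_mult x_div_expm1_sums) simp
    then show "(\<Sum>k. ennreal (f k u)) = ennreal (exp (- u) * x_div_expm1 (u / t))"
      using t u by (intro suminf_ennreal_eq) (auto simp: f_def)
  qed
  finally show ?thesis .
qed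

lemma mult_Polygamma_1_succ_mono:
  fixes s t :: real
  assumes "0 < s" "s \<le> t"
  shows "s * Polygamma 1 (s + 1) \<le> t * Polygamma 1 (t + 1)"
proof -
  have t: "0 < t" using assms by linarith
  have "ennreal (s * Polygamma 1 (s + 1)) \<le> ennreal (t * Polygamma 1 (t + 1))"
    unfolding Polygamma_1_succ_integral[OF \<open>0 < s\<close>] Polygamma_1_succ_integral[OF t]
  proof (intro nn_integral_mono)
    fix u :: real
    have "0 < u \<Longrightarrow> x_div_expm1 (u / s) \<le> x_div_expm1 (u / t)"
      using assms t by (intro x_div_expm1_antimono) (auto simp: frac_le)
    then show "ennreal (exp (- u) * x_div_expm1 (u / s)) * indicator {0<..} u
        \<le> ennreal (exp (- u) * x_div_expm1 (u / t)) * indicator {0<..} u"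
      by (auto simp: indicator_def intro!: ennreal_leI)
  qed
  moreover have "0 \<le> t * Polygamma 1 (t + 1)"
    using t by (intro mult_nonneg_nonneg less_imp_le[OF Polygamma_real_odd_pos]) auto
  ultimately show ?thesis by (simp add: ennreal_le_iff)
qed

lemma mult_Polygamma_1_succ_ge:
  assumes "1 \<le> (s::real)"
  shows "pi\<^sup>2 / 6 - 1 \<le> s * Polygamma 1 (s + 1)"
  using mult_Polygamma_1_succ_mono[OF zero_less_one assms] Polygamma_1_2 by simp

section \<open>Bounds on the digamma function\<close>

lemma Digamma_succ_sums:
  assumes "-1 < (a::real)"
  shows "(\<lambda>k. a / ((real k + 1) * (real k + 1 + a))) sums (Digamma (a + 1) + euler_mascheroni)"
proof -
  have "(\<lambda>k. inverse (real (Suc k)) - inverse (a + 1 + real k))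
      sums (Digamma (a + 1) + euler_mascheroni)"
    using assms summable_Digamma[of "a + 1"] by (simp add: Digamma_def summable_sums)
  moreover have "inverse (real (Suc k)) - inverse (a + 1 + real k)
      = a / ((real k + 1) * (real k + 1 + a))" for k
    using assms by (simp add: field_simps)
  ultimately show ?thesis by simp
qed

lemma has_real_derivative_Digamma_succ:
  assumes "0 < (x::real)"
  shows "((\<lambda>x. Digamma (x + 1)) has_real_derivative Polygamma 1 (x + 1)) (at x)"
proof -
  have "x + 1 \<notin> \<int>\<^sub>\<le>\<^sub>0" using assms nonpos_Ints_nonpos by fastforce
  from DERIV_chain2[OF has_field_derivative_Polygamma[OF this]
      DERIV_add[OF DERIV_ident DERIV_const]]
  show ?thesis by simp
qed

lemma Digamma_succ_bounds:
  fixes a :: real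
  assumes "1 \<le> a"
  shows "1 + (pi\<^sup>2 / 6 - 1) * ln a \<le> Digamma (a + 1) + euler_mascheroni"
    and "Digamma (a + 1) + euler_mascheroni \<le> 1 + ln a"
proof -
  define g where "g c x = Digamma (x + 1) + euler_mascheroni - c * ln x" for c x :: real
  have g_1: "g c 1 = 1" for c
    using Digamma_plus1[of "1::real"] by (simp add: g_def)
  have deriv: "(g c has_real_derivative Polygamma 1 (x + 1) - c / x) (at x)" if "x \<in> {1..a}" for x c
    using that unfolding g_def[abs_def]
    by (auto intro!: derivative_eq_intros has_real_derivative_Digamma_succ)
  have "g (pi\<^sup>2 / 6 - 1) 1 \<le> g (pi\<^sup>2 / 6 - 1) a"
  proof (rule deriv_nonneg_imp_mono[OF deriv _ assms])
    fix x assume "x \<in> {1..a}"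
    then show "0 \<le> Polygamma 1 (x + 1) - (pi\<^sup>2 / 6 - 1) / x"
      using mult_Polygamma_1_succ_ge[of x] by (simp add: divide_le_eq mult.commute)
  qed
  then show "1 + (pi\<^sup>2 / 6 - 1) * ln a \<le> Digamma (a + 1) + euler_mascheroni"
    by (simp add: g_1) (simp add: g_def)
  have "g 1 a \<le> g 1 1"
  proof (rule deriv_nonpos_imp_antimono[OF deriv _ assms])
    fix x assume "x \<in> {1..a}"
    then show "Polygamma 1 (x + 1) - 1 / x \<le> 0"
      using Polygamma_1_succ_le[of x] by simp
  qed
  then show "Digamma (a + 1) + euler_mascheroni \<le> 1 + ln a"
    by (simp add: g_1) (simp add: g_def)
qed

lemma Digamma_inverse_sums:
  assumes "0 \<le> (p::real)"
  shows "(\<lambda>k. p / ((real k + 1) * ((real k + 1) * p + 1)))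
    sums (p * (Digamma (1 / p + 1) + euler_mascheroni))"
proof (cases "p = 0")
  case False
  with assms have p: "0 < p" by simp
  then have "-1 < 1 / p" by (simp add: less_trans[OF _ divide_pos_pos])
  then have "(\<lambda>k. p * (1 / p / ((real k + 1) * (real k + 1 + 1 / p))))
      sums (p * (Digamma (1 / p + 1) + euler_mascheroni))"
    by (intro sums_mult Digamma_succ_sums)
  moreover have "p * (1 / p / ((real k + 1) * (real k + 1 + 1 / p)))
      = p / ((real k + 1) * ((real k + 1) * p + 1))" for k
    using p by (simp add: field_simps)
  ultimately show ?thesis by simp
qed simp

lemma Digamma_inverse_bounds:
  fixes p :: real
  assumes "0 \<le> p" "p \<le> 1"
  shows "p - (pi\<^sup>2 / 6 - 1) * (if p = 0 then 0 else p * ln p)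
      \<le> p * (Digamma (1 / p + 1) + euler_mascheroni)"
    and "p * (Digamma (1 / p + 1) + euler_mascheroni) \<le> p - (if p = 0 then 0 else p * ln p)"
proof -
  have "(p - (pi\<^sup>2 / 6 - 1) * (p * ln p) \<le> p * (Digamma (1 / p + 1) + euler_mascheroni)
      \<and> p * (Digamma (1 / p + 1) + euler_mascheroni) \<le> p - p * ln p)" if "0 < p"
  proof -
    have "1 \<le> 1 / p" "ln (1 / p) = - ln p" using assms that by (simp_all add: ln_div)
    note bounds = Digamma_succ_bounds[OF this(1), unfolded this(2)]
    show ?thesis
      using mult_left_mono[OF bounds(1), of p] mult_left_mono[OF bounds(2), of p] that
      by (simp add: algebra_simps)
  qed
  then show "p - (pi\<^sup>2 / 6 - 1) * (if p = 0 then 0 else p * ln p)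
      \<le> p * (Digamma (1 / p + 1) + euler_mascheroni)"
    and "p * (Digamma (1 / p + 1) + euler_mascheroni) \<le> p - (if p = 0 then 0 else p * ln p)"
    using assms by (cases "p = 0"; simp)+
qed

section \<open>Entropy and the expected score\<close>

lemma prob_vector_le_1: "prob_vector P \<Longrightarrow> P w \<le> 1"
  unfolding prob_vector_def by (metis finite UNIV_I member_le_sum)

lemma entropy_term_bounds:
  fixes p :: real
  assumes "0 \<le> p" "p \<le> 1"
  shows "0 \<le> - (if p = 0 then 0 else p * ln p)" and "- (if p = 0 then 0 else p * ln p) \<le> 1"
proof -
  have "0 \<le> - (p * ln p) \<and> - (p * ln p) \<le> 1" if p: "0 < p"
  proof -
    have "- ln p \<le> 1 / p - 1" using ln_le_minus_one[of "1 / p"] p by (simp add: ln_div)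
    then have "p * - ln p \<le> p * (1 / p - 1)" using p by (intro mult_left_mono) auto
    moreover have "ln p \<le> 0" using p assms by simp
    ultimately show ?thesis using p by (simp add: mult_nonneg_nonpos right_diff_distrib)
  qed
  then show "0 \<le> - (if p = 0 then 0 else p * ln p)" and "- (if p = 0 then 0 else p * ln p) \<le> 1"
    using assms by (cases "p = 0"; simp)+
qed

lemma Ent_bounds:
  fixes P :: "'w::finite \<Rightarrow> real"
  assumes P: "prob_vector P"
  shows "0 \<le> Ent P" and "Ent P \<le> CARD('w)"
proof -
  have "0 \<le> P w" "P w \<le> 1" for w using P prob_vector_le_1 by (auto simp: prob_vector_def)
  note term_bounds = entropy_term_bounds[OF this]
  have Ent_eq: "Ent P = (\<Sum>w\<in>UNIV. - (if P w = 0 then 0 else P w * ln (P w)))"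
    by (simp add: Ent_def sum_negf)
  show "0 \<le> Ent P" unfolding Ent_eq by (intro sum_nonneg term_bounds(1))
  have "Ent P \<le> (\<Sum>w\<in>(UNIV :: 'w set). 1)" unfolding Ent_eq by (rule sum_mono) (rule term_bounds(2))
  then show "Ent P \<le> CARD('w)" by simp
qed

text \<open>The expected score E h_ars(Y) for Y with law mu1 P (see nn_integral_h_ars_X below).
  Summands with P w = 0 vanish regardless of the junk value 1 / 0 = 0.\<close>
definition ars_mean :: "('w::finite \<Rightarrow> real) \<Rightarrow> real" where
  "ars_mean P = (\<Sum>w\<in>UNIV. P w * (Digamma (1 / P w + 1) + euler_mascheroni))"

lemma ars_mean_bounds:
  assumes P: "prob_vector P"
  shows "1 + (pi\<^sup>2 / 6 - 1) * Ent P \<le> ars_mean P"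
    and "ars_mean P \<le> 1 + Ent P"
proof -
  have "0 \<le> P w" "P w \<le> 1" for w using P prob_vector_le_1 by (auto simp: prob_vector_def)
  note term_bounds = Digamma_inverse_bounds[OF this]
  have sum_1: "(\<Sum>w\<in>UNIV. P w) = 1" using P by (simp add: prob_vector_def)
  have "(\<Sum>w\<in>UNIV. P w - (pi\<^sup>2 / 6 - 1) * (if P w = 0 then 0 else P w * ln (P w))) \<le> ars_mean P"
    unfolding ars_mean_def by (intro sum_mono term_bounds(1))
  then show "1 + (pi\<^sup>2 / 6 - 1) * Ent P \<le> ars_mean P"
    by (simp add: Ent_def sum_subtractf sum_1 sum_distrib_left[symmetric])
  have "ars_mean P \<le> (\<Sum>w\<in>UNIV. P w - (if P w = 0 then 0 else P w * ln (P w)))"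
    unfolding ars_mean_def by (intro sum_mono term_bounds(2))
  then show "ars_mean P \<le> 1 + Ent P"
    by (simp add: Ent_def sum_subtractf sum_1)
qed

lemma ars_mean_ge_1:
  assumes "prob_vector P"
  shows "1 \<le> ars_mean P"
proof -
  have "3\<^sup>2 \<le> pi\<^sup>2" using pi_gt3 by (intro power_mono) auto
  then have "0 \<le> (pi\<^sup>2 / 6 - 1) * Ent P"
    using Ent_bounds(1)[OF assms] by simp
  then show ?thesis using ars_mean_bounds(1)[OF assms] by simp
qed

section \<open>The distribution mu1\<close>

lemma F1_0: "F1 P 0 = 0"
  by (auto simp: F1_def intro!: sum.neutral)

lemma F1_eq_clamp:
  assumes "prob_vector P"
  shows "F1 P r = (\<Sum>w\<in>UNIV. if P w = 0 then 0 else P w * max 0 (min 1 r) powr (1 / P w))"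
proof -
  have "(\<Sum>w\<in>UNIV. if P w = 0 then 0 else P w * 1 powr (1 / P w)) = (\<Sum>w\<in>UNIV. P w)"
    by (intro sum.cong) auto
  then have one: "(\<Sum>w\<in>UNIV. if P w = 0 then 0 else P w * 1 powr (1 / P w)) = 1"
    using assms by (simp add: prob_vector_def)
  have zero: "(\<Sum>w\<in>UNIV. if P w = 0 then 0 else P w * 0 powr (1 / P w)) = 0"
    by (intro sum.neutral) simp
  consider "r < 0" | "1 \<le> r" | "0 \<le> r" "r < 1" by linarith
  then show ?thesis
  proof cases
    case 1
    then have clamp: "max 0 (min 1 r) = 0" by simp
    from 1 show ?thesis unfolding clamp F1_def using zero by simp
  next
    case 2
    then have clamp: "max 0 (min 1 r) = 1" by simp
    from 2 show ?thesis unfolding clamp F1_def using one by simp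
  next
    case 3
    then have clamp: "max 0 (min 1 r) = r" by simp
    from 3 show ?thesis unfolding clamp by (simp add: F1_def)
  qed
qed

lemma F1_mono:
  assumes "prob_vector P" "x \<le> y"
  shows "F1 P x \<le> F1 P y"
  unfolding F1_eq_clamp[OF assms(1)] using assms
  by (intro sum_mono) (auto simp: prob_vector_def intro!: mult_left_mono powr_mono2)

lemma F1_bounds:
  assumes "prob_vector P"
  shows "0 \<le> F1 P r" and "F1 P r \<le> 1"
proof -
  have "F1 P (min r (-1)) \<le> F1 P r" "F1 P r \<le> F1 P (max r 1)"
    using assms by (intro F1_mono; simp)+
  then show "0 \<le> F1 P r" "F1 P r \<le> 1" by (auto simp: F1_def)
qed

lemma F1_continuous:
  assumes "prob_vector P"
  shows "continuous_on UNIV (F1 P)"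
  unfolding F1_eq_clamp[OF assms, abs_def]
proof (intro continuous_on_sum)
  fix w
  have "0 < P w" if "P w \<noteq> 0" using assms that by (auto simp: prob_vector_def less_le)
  then show "continuous_on UNIV (\<lambda>r. if P w = 0 then 0 else P w * max 0 (min 1 r) powr (1 / P w))"
    by (cases "P w = 0") (auto intro!: continuous_intros continuous_on_powr')
qed

lemma measure_mu1_Ioo:
  assumes P: "prob_vector P"
  shows "measure (mu1 P) {r<..<1} = 1 - F1 P r"
proof (cases "r < 1")
  case True
  have "isCont (F1 P) a" for a
    using F1_continuous[OF P] by (simp add: continuous_on_eq_continuous_at)
  then have right_cont: "continuous (at_right a) (F1 P)" for a
    by (rule continuous_at_imp_continuous_at_within)
  have Ioc: "emeasure (mu1 P) {r<..1} = F1 P 1 - F1 P r"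
    unfolding mu1_def using True F1_mono[OF P] right_cont
    by (intro emeasure_interval_measure_Ioc) auto
  have atom: "emeasure (mu1 P) {1..1} = F1 P 1 - F1 P 1"
    unfolding mu1_def
    by (rule emeasure_interval_measure_Icc[OF order.refl F1_mono[OF P] F1_continuous[OF P]])
  have Ioo: "{r<..<1} = {r<..1} - {1..1}" using True by auto
  have "emeasure (mu1 P) {r<..<1} = emeasure (mu1 P) {r<..1} - emeasure (mu1 P) {1..1}"
    unfolding Ioo by (rule emeasure_Diff) (use atom True in \<open>auto simp: mu1_def\<close>)
  also have "\<dots> = ennreal (1 - F1 P r)"
    unfolding Ioc atom by (simp add: F1_def)
  finally show ?thesis
    using F1_bounds(2)[OF P, of r] by (simp add: measure_def)
next
  case False
  then have "{r<..<1} = {}" by simp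
  with False show ?thesis by (simp add: F1_def)
qed

lemma has_integral_one_minus_powr:
  assumes "0 < b"
  shows "((\<lambda>s. 1 - s powr b) has_integral b / (b + 1)) {0..1::real}"
proof -
  have "((\<lambda>s. 1 - s powr b) has_integral 1 - 1 powr (b + 1) / (b + 1)) {0..1::real}"
    using assms by (intro has_integral_diff has_integral_powr_from_0)
      (auto intro: has_integral_const_real[of 1 0 1, simplified])
  moreover have "1 - 1 powr (b + 1) / (b + 1) = b / (b + 1)"
    using assms by (simp add: field_simps)
  ultimately show ?thesis by simp
qed

lemma nn_integral_one_minus_F1_root:
  assumes P: "prob_vector P" and m: "0 < m"
  shows "(\<integral>\<^sup>+s\<in>{0<..}. ennreal (1 - F1 P (root m s)) \<partial>lborel)
    = ennreal (\<Sum>w\<in>UNIV. P w / (real m * P w + 1))"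
proof -
  define g where
    "g s = (\<Sum>w\<in>UNIV. if P w = 0 then 0 else P w * (1 - s powr (1 / (real m * P w))))" for s
  have "(g has_integral (\<Sum>w\<in>UNIV. P w / (real m * P w + 1))) {0..1}"
    unfolding g_def
  proof (intro has_integral_sum)
    fix w
    show "((\<lambda>s. if P w = 0 then 0 else P w * (1 - s powr (1 / (real m * P w))))
        has_integral P w / (real m * P w + 1)) {0..1}"
    proof (cases "P w = 0")
      case False
      with P have p: "0 < P w" by (auto simp: prob_vector_def less_le)
      then have "((\<lambda>s. P w * (1 - s powr (1 / (real m * P w)))) has_integral
          P w * ((1 / (real m * P w)) / (1 / (real m * P w) + 1))) {0..1}"
        using m by (intro has_integral_mult_right has_integral_one_minus_powr) simp
      moreover have "P w * ((1 / (real m * P w)) / (1 / (real m * P w) + 1))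
          = P w / (real m * P w + 1)"
        using p m by (simp add: field_simps)
      ultimately show ?thesis using False by simp
    qed simp
  qed simp
  then have g_integral: "(g has_integral (\<Sum>w\<in>UNIV. P w / (real m * P w + 1))) {0<..<1}"
    by (simp add: has_integral_Icc_iff_Ioo)
  have eq_g: "1 - F1 P (root m s) = g s" if "s \<in> {0<..<1}" for s
  proof -
    have root_powr: "root m s powr (1 / P w) = s powr (1 / (real m * P w))" for w
      using that m by (simp add: root_powr_inverse powr_powr)
    have "0 < root m s" "root m s < 1" using that m by auto
    then have "1 - F1 P (root m s) = (\<Sum>w\<in>UNIV. P w)
        - (\<Sum>w\<in>UNIV. if P w = 0 then 0 else P w * s powr (1 / (real m * P w)))"
      using P unfolding F1_def root_powr by (simp add: prob_vector_def)
    also have "\<dots> = g s"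
      unfolding g_def sum_subtractf[symmetric]
      by (intro sum.cong refl) (simp add: right_diff_distrib)
    finally show ?thesis .
  qed
  have integral:
    "((\<lambda>s. 1 - F1 P (root m s)) has_integral (\<Sum>w\<in>UNIV. P w / (real m * P w + 1))) {0<..<1}"
    using has_integral_eq[OF eq_g[symmetric] g_integral] .
  have "(\<integral>\<^sup>+s\<in>{0<..}. ennreal (1 - F1 P (root m s)) \<partial>lborel)
      = (\<integral>\<^sup>+s\<in>{0<..<1}. ennreal (1 - F1 P (root m s)) \<partial>lborel)"
  proof (intro nn_integral_cong)
    fix s :: real
    have "F1 P (root m s) = 1" if "1 \<le> s" using that m by (simp add: F1_def)
    then show "ennreal (1 - F1 P (root m s)) * indicator {0<..} s
        = ennreal (1 - F1 P (root m s)) * indicator {0<..<1} s"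
      by (cases "1 \<le> s") (auto simp: indicator_def)
  qed
  also have "\<dots> = ennreal (\<Sum>w\<in>UNIV. P w / (real m * P w + 1))"
    using F1_bounds(2)[OF P] by (intro nn_integral_has_integral_lebesgue'[OF _ integral]) simp
  finally show ?thesis .
qed

section \<open>Tokens whose law is a mixture of mu1\<close>

lemma borel_measurable_Polygamma [measurable]:
  "(Polygamma n :: real \<Rightarrow> real) \<in> borel_measurable borel"
proof (rule borel_measurable_continuous_countable_exceptions)
  show "countable (\<int>\<^sub>\<le>\<^sub>0 :: real set)"
    using countable_subset[OF nonpos_Ints_subset_Ints countable_int] .
  show "continuous_on (- \<int>\<^sub>\<le>\<^sub>0) (Polygamma n :: real \<Rightarrow> real)"
    by (rule continuous_on_Polygamma) auto
qed

lemma measurable_F1 [measurable (raw)]: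
  assumes [measurable]: "f \<in> N \<rightarrow>\<^sub>M (\<Pi>\<^sub>M w\<in>UNIV. borel)" "g \<in> borel_measurable N"
  shows "(\<lambda>x. F1 (f x) (g x)) \<in> borel_measurable N"
  unfolding F1_def by measurable

lemma measurable_Ent [measurable (raw)]:
  assumes [measurable]: "f \<in> N \<rightarrow>\<^sub>M (\<Pi>\<^sub>M w\<in>UNIV. borel)"
  shows "(\<lambda>x. Ent (f x)) \<in> borel_measurable N"
  unfolding Ent_def by measurable

lemma measurable_ars_mean [measurable (raw)]:
  assumes [measurable]: "f \<in> N \<rightarrow>\<^sub>M (\<Pi>\<^sub>M w\<in>UNIV. borel)"
  shows "(\<lambda>x. ars_mean (f x)) \<in> borel_measurable N"
  unfolding ars_mean_def by measurable

lemma nn_integral_layer_cake: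
  assumes "sigma_finite_measure M" and [measurable]: "f \<in> borel_measurable M"
  shows "(\<integral>\<^sup>+x. ennreal (f x) \<partial>M) = (\<integral>\<^sup>+s\<in>{0<..}. emeasure M {x \<in> space M. s < f x} \<partial>lborel)"
proof -
  interpret pair_sigma_finite M lborel
    using assms(1)
    by (intro pair_sigma_finite.intro) (auto simp: lborel.sigma_finite_measure_axioms)
  have "(\<integral>\<^sup>+x. ennreal (f x) \<partial>M) = (\<integral>\<^sup>+x. (\<integral>\<^sup>+s. indicator {0<..<f x} s \<partial>lborel) \<partial>M)"
  proof (intro nn_integral_cong)
    fix x
    show "ennreal (f x) = (\<integral>\<^sup>+s. indicator {0<..<f x} s \<partial>lborel)"
      by (cases "0 < f x") (simp_all add: ennreal_neg)
  qed
  also have "\<dots> = (\<integral>\<^sup>+s. (\<integral>\<^sup>+x. indicator {0<..<f x} s \<partial>M) \<partial>lborel)"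
  proof -
    have "(\<lambda>(x, s). indicator {0<..<f x} s :: ennreal) \<in> borel_measurable (M \<Otimes>\<^sub>M lborel)"
      unfolding indicator_def greaterThanLessThan_iff by measurable
    from Fubini'[OF this] show ?thesis by simp
  qed
  also have "\<dots> = (\<integral>\<^sup>+s\<in>{0<..}. emeasure M {x \<in> space M. s < f x} \<partial>lborel)"
  proof (intro nn_integral_cong)
    fix s :: real
    have "(\<integral>\<^sup>+x. indicator {0<..<f x} s \<partial>M)
        = (\<integral>\<^sup>+x. indicator {x \<in> space M. s < f x} x * indicator {0<..} s \<partial>M)"
      by (intro nn_integral_cong) (auto simp: indicator_def)
    then show "(\<integral>\<^sup>+x. indicator {0<..<f x} s \<partial>M)
        = emeasure M {x \<in> space M. s < f x} * indicator {0<..} s"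
      by (simp add: nn_integral_multc)
  qed
  finally show ?thesis .
qed

lemma h_ars_sums:
  assumes "0 \<le> y" "y < 1"
  shows "(\<lambda>k. y ^ Suc k / real (Suc k)) sums h_ars y"
proof -
  have "(\<lambda>n. - ((- (- y)) ^ n) / of_nat n) sums ln (1 + - y)"
    using assms by (intro ln_series') auto
  then have "(\<lambda>n. y ^ n / real n) sums h_ars y"
    unfolding h_ars_def using sums_minus by fastforce
  then show ?thesis by (subst sums_Suc_iff) simp
qed

locale mu1_mixture = prob_space M for M :: "'a measure" +
  fixes Q :: "'a \<Rightarrow> 'w::finite \<Rightarrow> real" and X :: "'a \<Rightarrow> real"
  assumes measurable_Q [measurable]: "Q \<in> M \<rightarrow>\<^sub>M (\<Pi>\<^sub>M w\<in>UNIV. borel)"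
    and prob_vector_Q: "x \<in> space M \<Longrightarrow> prob_vector (Q x)"
    and measurable_X [measurable]: "X \<in> borel_measurable M"
    and prob_X: "A \<in> sets borel \<Longrightarrow> prob {x \<in> space M. X x \<in> A} = (\<integral>x. measure (mu1 (Q x)) A \<partial>M)"
begin

lemma integrable_one_minus_F1_Q: "integrable M (\<lambda>x. 1 - F1 (Q x) r)"
  using F1_bounds[OF prob_vector_Q] by (intro integrable_const_bound[where B=1]) auto

lemma prob_X_Ioo: "prob {x \<in> space M. X x \<in> {r<..<1}} = (\<integral>x. 1 - F1 (Q x) r \<partial>M)"
  by (subst prob_X)
    (auto intro!: Bochner_Integration.integral_cong simp: measure_mu1_Ioo prob_vector_Q)

lemma AE_X_Ioo: "AE x in M. X x \<in> {0<..<1}"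
proof -
  have "prob {x \<in> space M. X x \<in> {0<..<1}} = 1"
    using prob_X_Ioo[of 0] by (simp add: F1_0 prob_space)
  from AE_prob_1[OF this] show ?thesis by auto
qed

lemma emeasure_X_power_greater:
  assumes m: "0 < m" and s: "0 < s"
  shows "emeasure M {x \<in> space M. s < X x ^ m} = (\<integral>\<^sup>+x. ennreal (1 - F1 (Q x) (root m s)) \<partial>M)"
proof -
  have "AE x in M. s < X x ^ m \<longleftrightarrow> X x \<in> {root m s<..<1}"
    using AE_X_Ioo
  proof eventually_elim
    case (elim x)
    then have "s < X x ^ m \<longleftrightarrow> root m s < root m (X x ^ m)" using m by simp
    also have "root m (X x ^ m) = X x" using elim m by (simp add: real_root_power_cancel)
    finally show ?case using elim by auto
  qed
  then have "emeasure M {x \<in> space M. s < X x ^ m}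
      = emeasure M {x \<in> space M. X x \<in> {root m s<..<1}}"
    by (intro emeasure_eq_AE) auto
  also have "\<dots> = ennreal (\<integral>x. 1 - F1 (Q x) (root m s) \<partial>M)"
    unfolding emeasure_eq_measure prob_X_Ioo ..
  also have "\<dots> = (\<integral>\<^sup>+x. ennreal (1 - F1 (Q x) (root m s)) \<partial>M)"
    using F1_bounds(2)[OF prob_vector_Q]
    by (intro nn_integral_eq_integral[symmetric] integrable_one_minus_F1_Q AE_I2) simp
  finally show ?thesis .
qed

lemma nn_integral_X_power:
  assumes m: "0 < m"
  shows "(\<integral>\<^sup>+x. ennreal (X x ^ m) \<partial>M) = (\<integral>\<^sup>+x. ennreal (\<Sum>w\<in>UNIV. Q x w / (real m * Q x w + 1)) \<partial>M)"
proof -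
  have sigma_finite_M: "sigma_finite_measure M"
    by (rule prob_space_imp_sigma_finite[OF prob_space_axioms])
  interpret pair_sigma_finite M lborel
    using sigma_finite_M
    by (intro pair_sigma_finite.intro) (auto simp: lborel.sigma_finite_measure_axioms)
  have "(\<integral>\<^sup>+x. ennreal (X x ^ m) \<partial>M) = (\<integral>\<^sup>+s\<in>{0<..}. emeasure M {x \<in> space M. s < X x ^ m} \<partial>lborel)"
    by (rule nn_integral_layer_cake[OF sigma_finite_M]) measurable
  also have "\<dots> = (\<integral>\<^sup>+s\<in>{0<..}. (\<integral>\<^sup>+x. ennreal (1 - F1 (Q x) (root m s)) \<partial>M) \<partial>lborel)"
    by (intro set_nn_integral_cong emeasure_X_power_greater m) auto
  also have "\<dots> = (\<integral>\<^sup>+x. (\<integral>\<^sup>+s\<in>{0<..}. ennreal (1 - F1 (Q x) (root m s)) \<partial>lborel) \<partial>M)"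
    by (subst nn_integral_multc[symmetric]) (measurable, rule Fubini', measurable)
  also have "\<dots> = (\<integral>\<^sup>+x. ennreal (\<Sum>w\<in>UNIV. Q x w / (real m * Q x w + 1)) \<partial>M)"
    by (intro nn_integral_cong nn_integral_one_minus_F1_root prob_vector_Q m)
  finally show ?thesis .
qed

lemma nn_integral_h_ars_X_term:
  "(\<integral>\<^sup>+x. ennreal (X x ^ Suc k / real (Suc k)) \<partial>M)
    = (\<integral>\<^sup>+x. ennreal (\<Sum>w\<in>UNIV. Q x w / ((real k + 1) * ((real k + 1) * Q x w + 1))) \<partial>M)"
proof -
  define c where "c = 1 / real (Suc k)"
  have c: "0 \<le> c" by (simp add: c_def)
  have "(\<integral>\<^sup>+x. ennreal (X x ^ Suc k / real (Suc k)) \<partial>M)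
      = (\<integral>\<^sup>+x. ennreal c * ennreal (X x ^ Suc k) \<partial>M)"
    using c by (simp add: c_def ennreal_mult'[symmetric])
  also have "\<dots> = ennreal c * (\<integral>\<^sup>+x. ennreal (X x ^ Suc k) \<partial>M)"
    by (rule nn_integral_cmult) measurable
  also have "\<dots> = ennreal c * (\<integral>\<^sup>+x. ennreal (\<Sum>w\<in>UNIV. Q x w / (real (Suc k) * Q x w + 1)) \<partial>M)"
    unfolding nn_integral_X_power[OF zero_less_Suc] ..
  also have "\<dots> = (\<integral>\<^sup>+x. ennreal (\<Sum>w\<in>UNIV. Q x w / ((real k + 1) * ((real k + 1) * Q x w + 1))) \<partial>M)"
  proof (subst nn_integral_cmult[symmetric], measurable, intro nn_integral_cong)
    fix x assume "x \<in> space M"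
    then have "0 \<le> Q x w" for w using prob_vector_Q by (simp add: prob_vector_def)
    then have "c * (\<Sum>w\<in>UNIV. Q x w / (real (Suc k) * Q x w + 1))
        = (\<Sum>w\<in>UNIV. Q x w / ((real k + 1) * ((real k + 1) * Q x w + 1)))"
      unfolding sum_distrib_left c_def
      by (intro sum.cong refl) (simp add: add_nonneg_nonneg add.commute)
    then show "ennreal c * ennreal (\<Sum>w\<in>UNIV. Q x w / (real (Suc k) * Q x w + 1))
        = ennreal (\<Sum>w\<in>UNIV. Q x w / ((real k + 1) * ((real k + 1) * Q x w + 1)))"
      using c by (simp add: ennreal_mult'[symmetric])
  qed
  finally show ?thesis .
qed

lemma nn_integral_h_ars_X: "(\<integral>\<^sup>+x. ennreal (h_ars (X x)) \<partial>M) = (\<integral>\<^sup>+x. ennreal (ars_mean (Q x)) \<partial>M)"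
proof -
  have "(\<integral>\<^sup>+x. ennreal (h_ars (X x)) \<partial>M) = (\<integral>\<^sup>+x. (\<Sum>k. ennreal (X x ^ Suc k / real (Suc k))) \<partial>M)"
  proof (rule nn_integral_cong_AE)
    show "AE x in M. ennreal (h_ars (X x)) = (\<Sum>k. ennreal (X x ^ Suc k / real (Suc k)))"
      using AE_X_Ioo
    proof eventually_elim
      case (elim x)
      then show ?case by (intro suminf_ennreal_eq[symmetric] h_ars_sums) auto
    qed
  qed
  also have "\<dots> = (\<Sum>k. \<integral>\<^sup>+x. ennreal (X x ^ Suc k / real (Suc k)) \<partial>M)"
    by (rule nn_integral_suminf) measurable
  also have "\<dots> = (\<Sum>k. \<integral>\<^sup>+x.
      ennreal (\<Sum>w\<in>UNIV. Q x w / ((real k + 1) * ((real k + 1) * Q x w + 1))) \<partial>M)"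
    unfolding nn_integral_h_ars_X_term ..
  also have "\<dots> = (\<integral>\<^sup>+x.
      (\<Sum>k. ennreal (\<Sum>w\<in>UNIV. Q x w / ((real k + 1) * ((real k + 1) * Q x w + 1)))) \<partial>M)"
    by (rule nn_integral_suminf[symmetric]) measurable
  also have "\<dots> = (\<integral>\<^sup>+x. ennreal (ars_mean (Q x)) \<partial>M)"
  proof (intro nn_integral_cong)
    fix x assume "x \<in> space M"
    then have "0 \<le> Q x w" for w using prob_vector_Q by (simp add: prob_vector_def)
    then show "(\<Sum>k. ennreal (\<Sum>w\<in>UNIV. Q x w / ((real k + 1) * ((real k + 1) * Q x w + 1))))
        = ennreal (ars_mean (Q x))"
      unfolding ars_mean_def
      by (intro suminf_ennreal_eq sums_sum Digamma_inverse_sums sum_nonneg divide_nonneg_nonneg)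
        (auto intro: add_nonneg_nonneg)
  qed
  finally show ?thesis .
qed

lemma integrable_Ent_Q: "integrable M (\<lambda>x. Ent (Q x))"
  using Ent_bounds[OF prob_vector_Q] by (intro integrable_const_bound[where B="CARD('w)"]) auto

lemma integrable_ars_mean_Q: "integrable M (\<lambda>x. ars_mean (Q x))"
proof (intro integrable_const_bound[where B="1 + CARD('w)"] AE_I2)
  fix x assume x: "x \<in> space M"
  show "norm (ars_mean (Q x)) \<le> 1 + CARD('w)"
    using ars_mean_ge_1[OF prob_vector_Q[OF x]] ars_mean_bounds(2)[OF prob_vector_Q[OF x]]
      Ent_bounds(2)[OF prob_vector_Q[OF x]] by simp
qed measurable

lemma ars_mean_Q_nonneg: "AE x in M. 0 \<le> ars_mean (Q x)"
  using ars_mean_ge_1[OF prob_vector_Q] by (intro AE_I2) fastforce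

lemma h_ars_X_nonneg: "AE x in M. 0 \<le> h_ars (X x)"
  using AE_X_Ioo by eventually_elim (simp add: h_ars_def)

lemma integrable_h_ars_X: "integrable M (\<lambda>x. h_ars (X x))"
proof (rule integrableI_nonneg)
  show "(\<integral>\<^sup>+x. ennreal (h_ars (X x)) \<partial>M) < \<infinity>"
    unfolding nn_integral_h_ars_X
    by (simp add: nn_integral_eq_integral[OF integrable_ars_mean_Q ars_mean_Q_nonneg])
qed (use h_ars_X_nonneg in \<open>simp_all add: h_ars_def\<close>)

lemma integral_h_ars_X: "(\<integral>x. h_ars (X x) \<partial>M) = (\<integral>x. ars_mean (Q x) \<partial>M)"
proof -
  have "ennreal (\<integral>x. h_ars (X x) \<partial>M) = ennreal (\<integral>x. ars_mean (Q x) \<partial>M)"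
    using nn_integral_h_ars_X
    by (simp add: nn_integral_eq_integral integrable_h_ars_X h_ars_X_nonneg integrable_ars_mean_Q
        ars_mean_Q_nonneg)
  then show ?thesis
    by (simp add: integral_nonneg_AE h_ars_X_nonneg ars_mean_Q_nonneg)
qed

lemma integral_h_ars_X_bounds:
  shows "1 + (pi\<^sup>2 / 6 - 1) * (\<integral>x. Ent (Q x) \<partial>M) \<le> (\<integral>x. h_ars (X x) \<partial>M)"
    and "(\<integral>x. h_ars (X x) \<partial>M) \<le> 1 + (\<integral>x. Ent (Q x) \<partial>M)"
proof -
  have affine: "1 + C * (\<integral>x. Ent (Q x) \<partial>M) = (\<integral>x. 1 + C * Ent (Q x) \<partial>M)" for C
    using integrable_Ent_Q by (simp add: prob_space)
  show "1 + (pi\<^sup>2 / 6 - 1) * (\<integral>x. Ent (Q x) \<partial>M) \<le> (\<integral>x. h_ars (X x) \<partial>M)"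
    unfolding affine integral_h_ars_X using integrable_Ent_Q integrable_ars_mean_Q
    by (intro integral_mono ars_mean_bounds(1) prob_vector_Q) auto
  show "(\<integral>x. h_ars (X x) \<partial>M) \<le> 1 + (\<integral>x. Ent (Q x) \<partial>M)"
    using affine[of 1] unfolding integral_h_ars_X using integrable_Ent_Q integrable_ars_mean_Q
    by (simp only: mult_1) (intro integral_mono ars_mean_bounds(2) prob_vector_Q; simp)
qed

end

lemma mu1_mixtureI:
  fixes Q :: "'a \<Rightarrow> 'w::finite \<Rightarrow> real"
  assumes "prob_space M"
    and Q: "Q \<in> M \<rightarrow>\<^sub>M (\<Pi>\<^sub>M w\<in>UNIV. borel)" "\<And>x. x \<in> space M \<Longrightarrow> prob_vector (Q x)"
    and X: "X \<in> borel_measurable M"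
    and law: "\<And>A B. A \<in> sets borel \<Longrightarrow> B \<in> sets (\<Pi>\<^sub>M w\<in>UNIV. borel) \<Longrightarrow>
      measure M {x \<in> space M. X x \<in> A \<and> Q x \<in> B}
        = (\<integral>x. indicator B (Q x) * measure (mu1 (Q x)) A \<partial>M)"
  shows "mu1_mixture M Q X"
proof -
  interpret prob_space M by (rule assms(1))
  have Q_space: "Q x \<in> space (\<Pi>\<^sub>M w\<in>UNIV. borel)" if "x \<in> space M" for x
    using measurable_space[OF Q(1) that] .
  show ?thesis
  proof
    fix A :: "real set" assume A: "A \<in> sets borel"
    have "{x \<in> space M. X x \<in> A \<and> Q x \<in> space (\<Pi>\<^sub>M w\<in>UNIV. borel)} = {x \<in> space M. X x \<in> A}"
      using Q_space by auto
    moreover have "(\<integral>x. indicator (space (\<Pi>\<^sub>M w\<in>UNIV. borel)) (Q x) * measure (mu1 (Q x)) A \<partial>M)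
        = (\<integral>x. measure (mu1 (Q x)) A \<partial>M)"
      using Q_space by (intro Bochner_Integration.integral_cong) auto
    ultimately show "prob {x \<in> space M. X x \<in> A} = (\<integral>x. measure (mu1 (Q x)) A \<partial>M)"
      using law[OF A sets.top] by simp
  qed (use Q X in auto)
qed

theorem propositionA1:
  fixes M :: "'a measure"
    and P :: "nat \<Rightarrow> 'a \<Rightarrow> ('w::finite \<Rightarrow> real)"
    and Y :: "nat \<Rightarrow> 'a \<Rightarrow> real"
    and n :: nat
  assumes "prob_space M"
    and P_meas: "\<And>t. t \<in> {1..n} \<Longrightarrow> P t \<in> M \<rightarrow>\<^sub>M (\<Pi>\<^sub>M w\<in>UNIV. borel)"
    and P_vec: "\<And>t x. t \<in> {1..n} \<Longrightarrow> x \<in> space M \<Longrightarrow> prob_vector (P t x)"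
    and Y_meas: "\<And>t. t \<in> {1..n} \<Longrightarrow> Y t \<in> borel_measurable M"
    and Y_cond: "\<And>t A B. t \<in> {1..n} \<Longrightarrow> A \<in> sets borel \<Longrightarrow>
                   B \<in> sets (\<Pi>\<^sub>M w\<in>UNIV. borel) \<Longrightarrow>
                   measure M {x \<in> space M. Y t x \<in> A \<and> P t x \<in> B}
                     = (\<integral>x. indicator B (P t x) * measure (mu1 (P t x)) A \<partial>M)"
  shows "real n + (\<Sum>t=1..n. (\<integral>x. Ent (P t x) \<partial>M))
           \<ge> (\<integral>x. (\<Sum>t=1..n. h_ars (Y t x)) \<partial>M)
         \<and> (\<integral>x. (\<Sum>t=1..n. h_ars (Y t x)) \<partial>M)
           \<ge> real n + (pi\<^sup>2 / 6 - 1) * (\<Sum>t=1..n. (\<integral>x. Ent (P t x) \<partial>M))"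
proof -
  have mixture: "mu1_mixture M (P t) (Y t)" if "t \<in> {1..n}" for t
    using that by (intro mu1_mixtureI assms(1) P_meas P_vec Y_meas Y_cond)
  have "(\<integral>x. (\<Sum>t=1..n. h_ars (Y t x)) \<partial>M) = (\<Sum>t=1..n. (\<integral>x. h_ars (Y t x) \<partial>M))"
    by (intro Bochner_Integration.integral_sum mu1_mixture.integrable_h_ars_X[OF mixture])
  moreover have "(\<Sum>t=1..n. (\<integral>x. h_ars (Y t x) \<partial>M)) \<le> (\<Sum>t=1..n. 1 + (\<integral>x. Ent (P t x) \<partial>M))"
    by (intro sum_mono mu1_mixture.integral_h_ars_X_bounds(2)[OF mixture])
  moreover have "(\<Sum>t=1..n. 1 + (pi\<^sup>2 / 6 - 1) * (\<integral>x. Ent (P t x) \<partial>M))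
      \<le> (\<Sum>t=1..n. (\<integral>x. h_ars (Y t x) \<partial>M))"
    by (intro sum_mono mu1_mixture.integral_h_ars_X_bounds(1)[OF mixture])
  ultimately show ?thesis
    by (simp add: sum.distrib sum_distrib_left)
qed

end
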